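(* In the quantized ARX setting described in the context, suppose Assumptions (A1)–(A4) and (A6) hold, and let $0\le q\le q_0$. Write the least squares estimate $\theta_n(p^*,q)=[-a_{1n}(q),\dots,-a_{p^*n}(q),b_{1n}(q),\dots,b_{qn}(q)]^\top$, define $$\hat\theta_n(q)=[-a_{1n}(q),\dots,-a_{p^*n}(q),b_{1n}(q),\dots,b_{qn}(q),\underbrace{0,\dots,0}_{q_0-q}]^\top$$ and $\tilde\theta_n(q)=\bar\theta(p^*,q_0)-\hat\theta_n(q)$. Then there is a constant $\gamma'$ such that, almost surely, $\|\tilde\theta_n(q)\|\le\gamma'$ for all sufficiently large $n$.
   Context: System: $y_{n+1}=-a_1y_n-\dots-a_{p_0}y_{n-p_0+1}+b_1u_n+\dots+b_{q_0}u_{n-q_0+1}+w_{n+1}$, $n\ge0$, i.e. $A(z)y_{n+1}=B(z)u_n+w_{n+1}$ with $A(z)=1+a_1z+\dots+a_{p_0}z^{p_0}$ ($p_0\ge0$), $B(z)=b_1+\dots+b_{q_0}z^{q_0-1}$ ($q_0\ge1$), $z$ the backward shift, $a_{p_0}\ne0$, $b_{q_0}\ne0$. Noise $\{w_n\}$ i.i.d. $N(0,1)$; $y_n=u_n=w_n=0$ for $n<0$. With quantization step $\varepsilon>0$, $s_n=\varepsilon\lfloor y_n/\varepsilon+1/2\rfloor$. For integers $p,q\ge0$, $\psi_i(p,q)=[s_i,\dots,s_{i-p+1},u_i,\dots,u_{i-q+1}]^\top$ with $s_i=u_i=0$ when $i\le0$; $P_{n}(p,q)=(I+\sum_{i=0}^{n-1}\psi_i(p,q)\psi_i(p,q)^\top)^{-1}$;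 $\lambda^{(p,q)}_{min}(n)$ is the smallest eigenvalue of $P_{n+1}^{-1}(p,q)$. Least squares estimate $\theta_n(p,q)=P_n(p,q)\sum_{i=0}^{n-1}\psi_i(p,q)s_{i+1}$. $\bar\theta(p,q)=[-a_1,\dots,-a_p,b_1,\dots,b_q]^\top$ with $a_i=0$ for $i>p_0$, $b_j=0$ for $j>q_0$. Assumptions: (A1) $\{u_i\}$ i.i.d., uniform on $[-\delta,\delta]$, $\delta>0$. (A2) $A(z)\ne0$ for all $|z|\le1$. (A3) There is $c>0$ with $|a_i|\le c$, $|b_j|\le c$ for all $i,j$, and $\varepsilon<\frac{1}{2(1+p_0c)}$. (A4) $(p_0,q_0)\in\{(p,q):0\le p\le p^*,1\le q\le q^*\}$ for known integers $p^*,q^*>0$. (A6) There is $c_2>0$ such that for all $0\le q\le q^*$, almost surely $\lambda^{(p^*,q)}_{min}(n)\ge c_2(n+1)$ for all sufficiently large $n$. *)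

theory Defs
  imports "HOL-Probability.Probability" "Jordan_Normal_Form.Gauss_Jordan_Elimination"
    "Jordan_Normal_Form.Char_Poly"
begin

definition zneg :: "(nat \<Rightarrow> real) \<Rightarrow> int \<Rightarrow> real" where
  "zneg f i = (if i < 0 then 0 else f (nat i))"

text \<open>Sequence extended by zero to indices i <= 0 (convention s_i = u_i = 0 for i <= 0 in psi).\<close>
definition zle :: "(nat \<Rightarrow> real) \<Rightarrow> int \<Rightarrow> real" where
  "zle f i = (if i \<le> 0 then 0 else f (nat i))"

definition quant :: "real \<Rightarrow> real \<Rightarrow> real" where
  "quant \<epsilon> x = \<epsilon> * of_int \<lfloor>x / \<epsilon> + 1/2\<rfloor>"

definition psi :: "(nat \<Rightarrow> real) \<Rightarrow> (nat \<Rightarrow> real) \<Rightarrow> nat \<Rightarrow> nat \<Rightarrow> nat \<Rightarrow> real vec" where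
  "psi s u p q i = vec (p + q) (\<lambda>k. if k < p then zle s (int i - int k)
                                   else zle u (int i - int (k - p)))"

definition Pinv :: "(nat \<Rightarrow> real) \<Rightarrow> (nat \<Rightarrow> real) \<Rightarrow> nat \<Rightarrow> nat \<Rightarrow> nat \<Rightarrow> real mat" where
  "Pinv s u p q n = 1\<^sub>m (p + q) +
     mat (p + q) (p + q) (\<lambda>(j, k). \<Sum>i<n. vec_index (psi s u p q i) j * vec_index (psi s u p q i) k)"

definition Pmat :: "(nat \<Rightarrow> real) \<Rightarrow> (nat \<Rightarrow> real) \<Rightarrow> nat \<Rightarrow> nat \<Rightarrow> nat \<Rightarrow> real mat" where
  "Pmat s u p q n = the (mat_inverse (Pinv s u p q n))"

definition lam_min :: "(nat \<Rightarrow> real) \<Rightarrow> (nat \<Rightarrow> real) \<Rightarrow> nat \<Rightarrow> nat \<Rightarrow> nat \<Rightarrow> real" where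
  "lam_min s u p q n = Min {k. eigenvalue (Pinv s u p q (n + 1)) k}"

definition theta :: "(nat \<Rightarrow> real) \<Rightarrow> (nat \<Rightarrow> real) \<Rightarrow> nat \<Rightarrow> nat \<Rightarrow> nat \<Rightarrow> real vec" where
  "theta s u p q n = Pmat s u p q n *\<^sub>v
     vec (p + q) (\<lambda>j. \<Sum>i<n. vec_index (psi s u p q i) j * s (i + 1))"

definition theta_bar :: "(nat \<Rightarrow> real) \<Rightarrow> (nat \<Rightarrow> real) \<Rightarrow> nat \<Rightarrow> nat \<Rightarrow> nat \<Rightarrow> nat \<Rightarrow> real vec" where
  "theta_bar a b p0 q0 p q = vec (p + q) (\<lambda>k. if k < p then (if k + 1 \<le> p0 then - a (k + 1) else 0)
                                          else (if k - p + 1 \<le> q0 then b (k - p + 1) else 0))"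

definition theta_hat :: "(nat \<Rightarrow> real) \<Rightarrow> (nat \<Rightarrow> real) \<Rightarrow> nat \<Rightarrow> nat \<Rightarrow> nat \<Rightarrow> nat \<Rightarrow> real vec" where
  "theta_hat s u pstar q0 q n = vec (pstar + q0)
     (\<lambda>k. if k < pstar + q then vec_index (theta s u pstar q n) k else 0)"

definition vnorm :: "real vec \<Rightarrow> real" where
  "vnorm v = sqrt (\<Sum>i<dim_vec v. (vec_index v i)\<^sup>2)"

end

theory Submission
  imports Defs
begin

(* Let theta = theta_bar(p*,q) and let r_i = s_(i+1) - psi_i^T theta be its residual. The
   least-squares error z = theta_(n+1) - theta solves the regularized normal equations
   P_(n+1)^-1 z = - theta + sum_(i<=n) psi_i r_i, whence
   lambda_min(P_(n+1)^-1) |z|^2 <= |theta|^2 + sum_(i<=n) r_i^2.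
   For i >= p0 the residual differs from the noise w_(i+1) only by quantization errors (at most
   eps/2 each) and input terms (at most c delta each, including those a model with q < q0 omits),
   i.e. by a constant G. Chebyshev's inequality on dyadic blocks and Borel-Cantelli give
   sum_(i<n) w_(i+1)^2 <= 4 n eventually almost surely, so the right-hand side grows linearly,
   while (A6) makes the left-hand side at least c2 (n+1) |z|^2. Zero-padding to length p*+q0 only
   adds the entries of theta_bar(p*,q0) beyond p*+q. *)

no_notation vec_nth (infixl \<open>$\<close> 90)

section \<open>Quadratic forms and the smallest eigenvalue\<close>

definition quad_form :: "(nat \<Rightarrow> nat \<Rightarrow> real) \<Rightarrow> nat \<Rightarrow> (nat \<Rightarrow> real) \<Rightarrow> real" where
  "quad_form Q N x = (\<Sum>j<N. \<Sum>k<N. Q j k * x j * x k)"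

lemma quad_form_eq_sum_mult_row: "quad_form Q N x = (\<Sum>j<N. x j * (\<Sum>k<N. Q j k * x k))"
  unfolding quad_form_def by (simp add: sum_distrib_left mult_ac)

lemma quad_form_scale: "quad_form Q N (\<lambda>i. a * x i) = a\<^sup>2 * quad_form Q N x"
  unfolding quad_form_def by (simp add: sum_distrib_left algebra_simps power2_eq_square)

lemma quad_form_restrict: "quad_form Q N (\<lambda>i. if i < N then x i else 0) = quad_form Q N x"
  unfolding quad_form_def by (intro sum.cong refl) auto

lemma quad_form_add_scaled:
  assumes "\<And>j k. j < N \<Longrightarrow> k < N \<Longrightarrow> Q j k = Q k j"
  shows "quad_form Q N (\<lambda>i. x i + t * g i) =
    quad_form Q N x + 2 * t * (\<Sum>j<N. g j * (\<Sum>k<N. Q j k * x k)) + t\<^sup>2 * quad_form Q N g"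
proof -
  define B where "B = (\<Sum>j<N. \<Sum>k<N. Q j k * g j * x k)"
  define C where "C = (\<Sum>j<N. \<Sum>k<N. Q j k * x j * g k)"
  have "quad_form Q N (\<lambda>i. x i + t * g i) = quad_form Q N x + t * B + t * C + t\<^sup>2 * quad_form Q N g"
    unfolding quad_form_def B_def C_def
    by (simp add: sum_distrib_left sum.distrib[symmetric] algebra_simps power2_eq_square)
  moreover have "C = B"
  proof -
    have "C = (\<Sum>k<N. \<Sum>j<N. Q j k * x j * g k)"
      unfolding C_def by (rule sum.swap)
    also have "\<dots> = B"
      unfolding B_def using assms by (intro sum.cong refl) (auto simp: mult.commute)
    finally show ?thesis .
  qed
  moreover have "(\<Sum>j<N. g j * (\<Sum>k<N. Q j k * x k)) = B"
    unfolding B_def by (simp add: sum_distrib_left algebra_simps)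
  ultimately show ?thesis
    by (simp add: algebra_simps)
qed

lemma continuous_on_quad_form: "continuous_on S (quad_form Q N)"
  unfolding quad_form_def
  by (intro continuous_intros continuous_on_subset[OF continuous_on_product_coordinates]) auto

definition unit_sphere_on :: "nat \<Rightarrow> (nat \<Rightarrow> real) set" where
  "unit_sphere_on N = {x. (\<forall>i\<ge>N. x i = 0) \<and> (\<Sum>i<N. (x i)\<^sup>2) = 1}"

lemma compact_unit_sphere_on: "compact (unit_sphere_on N)"
proof -
  define box where "box = PiE UNIV (\<lambda>i. if i < N then {-1..1::real} else {0})"
  have "compactin (product_topology (\<lambda>i. euclidean) UNIV) box"
    unfolding box_def by (subst compactin_PiE) auto
  then have "compact box"
    by (simp add: euclidean_product_topology)
  moreover have "closed {x::nat \<Rightarrow> real. (\<Sum>i<N. (x i)\<^sup>2) = 1}"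
    by (intro closed_Collect_eq continuous_intros
          continuous_on_compose2[OF continuous_on_product_coordinates]) auto
  moreover have "unit_sphere_on N = box \<inter> {x. (\<Sum>i<N. (x i)\<^sup>2) = 1}"
  proof (intro equalityI subsetI)
    fix x assume x: "x \<in> unit_sphere_on N"
    have "\<bar>x i\<bar> \<le> 1" if "i < N" for i
    proof -
      have "(x i)\<^sup>2 \<le> (\<Sum>i<N. (x i)\<^sup>2)"
        using that by (intro member_le_sum) auto
      then show ?thesis
        using x by (simp add: unit_sphere_on_def abs_square_le_1)
    qed
    then show "x \<in> box \<inter> {x. (\<Sum>i<N. (x i)\<^sup>2) = 1}"
      using x by (auto simp: box_def PiE_UNIV_domain unit_sphere_on_def abs_le_iff)
  next
    fix x assume x: "x \<in> box \<inter> {x. (\<Sum>i<N. (x i)\<^sup>2) = 1}"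
    have "x i = 0" if "N \<le> i" for i
      using x that by (auto simp: box_def PiE_UNIV_domain Pi_iff dest!: spec[of _ i])
    then show "x \<in> unit_sphere_on N"
      using x by (simp add: unit_sphere_on_def)
  qed
  ultimately show ?thesis
    by (simp add: compact_Int_closed)
qed

lemma quad_form_attains_min_on_unit_sphere:
  assumes "N > 0"
  obtains x0 where "x0 \<in> unit_sphere_on N"
    and "\<And>x. x \<in> unit_sphere_on N \<Longrightarrow> quad_form Q N x0 \<le> quad_form Q N x"
proof -
  define e where "e = (\<lambda>i::nat. if i = 0 then 1 else 0 :: real)"
  have "(\<Sum>i<N. (e i)\<^sup>2) = (\<Sum>i<N. e i)"
    by (intro sum.cong) (auto simp: e_def)
  then have "e \<in> unit_sphere_on N"
    using assms by (simp add: unit_sphere_on_def e_def)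
  then have "unit_sphere_on N \<noteq> {}"
    by blast
  then show ?thesis
    using continuous_attains_inf[OF compact_unit_sphere_on _ continuous_on_quad_form] that by blast
qed

lemma rayleigh_lower_bound:
  assumes "\<And>y. y \<in> unit_sphere_on N \<Longrightarrow> m \<le> quad_form Q N y"
  shows "m * (\<Sum>i<N. (x i)\<^sup>2) \<le> quad_form Q N x"
proof -
  define s where "s = (\<Sum>i<N. (x i)\<^sup>2)"
  have "s \<ge> 0"
    unfolding s_def by (simp add: sum_nonneg)
  show ?thesis
  proof (cases "s = 0")
    case True
    then have "\<forall>i<N. x i = 0"
      unfolding s_def by (simp add: sum_nonneg_eq_0_iff)
    then show ?thesis
      by (simp add: quad_form_def)
  next
    case False
    with \<open>s \<ge> 0\<close> have "s > 0"
      by simp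
    define y where "y = (\<lambda>i. (1 / sqrt s) * (if i < N then x i else 0))"
    have "(\<Sum>i<N. (y i)\<^sup>2) = (\<Sum>i<N. (x i)\<^sup>2) / s"
      using \<open>s > 0\<close> by (simp add: y_def power_divide sum_divide_distrib)
    also have "\<dots> = 1"
      using \<open>s > 0\<close> by (simp add: s_def)
    finally have "y \<in> unit_sphere_on N"
      by (simp add: unit_sphere_on_def y_def)
    then have "m \<le> quad_form Q N y"
      by (rule assms)
    also have "\<dots> = quad_form Q N x / s"
      unfolding y_def quad_form_scale quad_form_restrict using \<open>s > 0\<close> by (simp add: power_divide)
    finally show ?thesis
      using \<open>s > 0\<close> by (simp add: s_def[symmetric] pos_le_divide_eq)
  qed
qed

lemma linear_coeff_zero_if_quadratic_nonneg:
  fixes b d :: real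
  assumes "\<And>t. 0 \<le> t * b + t\<^sup>2 * d"
  shows "b = 0"
proof (rule ccontr)
  assume "b \<noteq> 0"
  define D where "D = \<bar>d\<bar> + 1"
  have "D > 0"
    by (simp add: D_def)
  define t where "t = - b / D"
  have "t * b + t\<^sup>2 * d \<le> t * b + t\<^sup>2 * (D - 1)"
    by (intro add_left_mono mult_left_mono) (auto simp: D_def)
  also have "\<dots> = - (b / D)\<^sup>2"
    using \<open>D > 0\<close> by (simp add: t_def field_simps power2_eq_square)
  also have "\<dots> < 0"
    using \<open>b \<noteq> 0\<close> \<open>D > 0\<close> by simp
  finally show False
    using assms[of t] by linarith
qed

(* Along the line x0 + t g, with g = Q x0 - m x0, minimality of the Rayleigh quotient at x0
   leaves a quadratic in t that is nonnegative and has linear coefficient 2 |g|^2. *)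
lemma unit_sphere_minimizer_is_eigenvector:
  assumes sym: "\<And>j k. j < N \<Longrightarrow> k < N \<Longrightarrow> Q j k = Q k j"
    and x0: "x0 \<in> unit_sphere_on N"
    and min: "\<And>x. x \<in> unit_sphere_on N \<Longrightarrow> quad_form Q N x0 \<le> quad_form Q N x"
    and "j < N"
  shows "(\<Sum>k<N. Q j k * x0 k) = quad_form Q N x0 * x0 j"
proof -
  define m where "m = quad_form Q N x0"
  define g where "g = (\<lambda>j. (\<Sum>k<N. Q j k * x0 k) - m * x0 j)"
  have "0 \<le> t * (2 * (\<Sum>j<N. (g j)\<^sup>2)) + t\<^sup>2 * (quad_form Q N g - m * (\<Sum>j<N. (g j)\<^sup>2))" for t
  proof -
    have "m * (\<Sum>i<N. (x0 i + t * g i)\<^sup>2) \<le> quad_form Q N (\<lambda>i. x0 i + t * g i)"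
      using min unfolding m_def by (rule rayleigh_lower_bound)
    also have "\<dots> = m + 2 * t * (\<Sum>j<N. g j * (\<Sum>k<N. Q j k * x0 k)) + t\<^sup>2 * quad_form Q N g"
      using quad_form_add_scaled[OF sym] m_def by simp
    finally have "m * (\<Sum>i<N. (x0 i + t * g i)\<^sup>2) \<le> \<dots>" .
    moreover have "(\<Sum>i<N. (x0 i + t * g i)\<^sup>2) = 1 + 2 * t * (\<Sum>j<N. g j * x0 j) + t\<^sup>2 * (\<Sum>j<N. (g j)\<^sup>2)"
      using x0 by (simp add: unit_sphere_on_def power2_sum sum.distrib sum_distrib_left
          algebra_simps power_mult_distrib)
    moreover have "(\<Sum>j<N. g j * (\<Sum>k<N. Q j k * x0 k)) - m * (\<Sum>j<N. g j * x0 j) = (\<Sum>j<N. (g j)\<^sup>2)"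
      by (simp add: sum_distrib_left sum_subtractf[symmetric] power2_eq_square g_def algebra_simps)
    ultimately show ?thesis
      by (simp add: algebra_simps)
  qed
  then have "2 * (\<Sum>j<N. (g j)\<^sup>2) = 0"
    by (rule linear_coeff_zero_if_quadratic_nonneg)
  then have "g j = 0"
    using \<open>j < N\<close> by (simp add: sum_nonneg_eq_0_iff)
  then show ?thesis
    by (simp add: g_def m_def)
qed

lemma finite_eigenvalues:
  fixes A :: "real mat"
  assumes "A \<in> carrier_mat N N"
  shows "finite {k. eigenvalue A k}"
proof -
  have "char_poly A \<noteq> 0"
    using degree_monic_char_poly[OF assms] by (metis coeff_0 one_neq_zero)
  then have "finite {k. poly (char_poly A) k = 0}"
    by (rule poly_roots_finite)
  then show ?thesis
    using eigenvalue_root_char_poly[OF assms] by simp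
qed

lemma mult_mat_vec_index_sum:
  assumes "A \<in> carrier_mat nr nc" "v \<in> carrier_vec nc" "j < nr"
  shows "(A *\<^sub>v v) $ j = (\<Sum>k<nc. A $$ (j, k) * v $ k)"
  using assms by (auto simp: scalar_prod_def lessThan_atLeast0 intro!: sum.cong)

lemma min_eigenvalue_mult_sum_squares_le_quad_form:
  fixes A :: "real mat"
  assumes A: "A \<in> carrier_mat N N" and "N > 0"
    and sym: "\<And>j k. j < N \<Longrightarrow> k < N \<Longrightarrow> A $$ (j, k) = A $$ (k, j)"
  shows "Min {k. eigenvalue A k} * (\<Sum>i<N. (x i)\<^sup>2) \<le> quad_form (\<lambda>j k. A $$ (j, k)) N x"
proof -
  let ?Q = "\<lambda>j k. A $$ (j, k)"
  obtain x0 where x0: "x0 \<in> unit_sphere_on N"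
    and min: "\<And>x. x \<in> unit_sphere_on N \<Longrightarrow> quad_form ?Q N x0 \<le> quad_form ?Q N x"
    using quad_form_attains_min_on_unit_sphere[OF \<open>N > 0\<close>] by blast
  define m where "m = quad_form ?Q N x0"
  define v where "v = vec N x0"
  have "v \<noteq> 0\<^sub>v N"
  proof
    assume "v = 0\<^sub>v N"
    then have "\<forall>i<N. x0 i = 0"
      unfolding v_def by (metis index_vec index_zero_vec(1))
    then show False
      using x0 by (simp add: unit_sphere_on_def)
  qed
  moreover have "A *\<^sub>v v = m \<cdot>\<^sub>v v"
  proof (rule eq_vecI)
    fix j assume "j < dim_vec (m \<cdot>\<^sub>v v)"
    then have "j < N"
      by (simp add: v_def)
    have "(A *\<^sub>v v) $ j = (\<Sum>k<N. A $$ (j, k) * x0 k)"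
      using mult_mat_vec_index_sum[OF A _ \<open>j < N\<close>, of v] by (simp add: v_def)
    also have "\<dots> = m * x0 j"
      unfolding m_def using sym x0 min \<open>j < N\<close> by (rule unit_sphere_minimizer_is_eigenvector)
    finally show "(A *\<^sub>v v) $ j = (m \<cdot>\<^sub>v v) $ j"
      using \<open>j < N\<close> by (simp add: v_def)
  qed (use A in \<open>simp add: v_def\<close>)
  moreover have "v \<in> carrier_vec N"
    by (simp add: v_def)
  ultimately have "eigenvalue A m"
    using A unfolding eigenvalue_def eigenvector_def by blast
  then have "Min {k. eigenvalue A k} \<le> m"
    using finite_eigenvalues[OF A] by (simp add: Min_le)
  then have "Min {k. eigenvalue A k} * (\<Sum>i<N. (x i)\<^sup>2) \<le> m * (\<Sum>i<N. (x i)\<^sup>2)"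
    by (simp add: mult_right_mono sum_nonneg)
  also have "\<dots> \<le> quad_form ?Q N x"
    using min unfolding m_def by (rule rayleigh_lower_bound)
  finally show ?thesis .
qed

section \<open>Regularized least squares\<close>

lemma two_mult_le_sum_squares: "2 * (a::real) * b \<le> a\<^sup>2 + b\<^sup>2"
  using sum_squares_bound[of a b] by simp

lemma two_sum_mult_le_sum_squares:
  fixes f g :: "'a \<Rightarrow> real"
  shows "2 * (\<Sum>i\<in>A. f i * g i) \<le> (\<Sum>i\<in>A. (f i)\<^sup>2) + (\<Sum>i\<in>A. (g i)\<^sup>2)"
proof -
  have "2 * (\<Sum>i\<in>A. f i * g i) = (\<Sum>i\<in>A. 2 * f i * g i)"
    by (simp add: sum_distrib_left mult.assoc)
  also have "\<dots> \<le> (\<Sum>i\<in>A. (f i)\<^sup>2 + (g i)\<^sup>2)"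
    by (intro sum_mono two_mult_le_sum_squares)
  finally show ?thesis
    by (simp add: sum.distrib)
qed

lemma sum_mult_transpose:
  fixes \<psi> :: "nat \<Rightarrow> nat \<Rightarrow> real"
  shows "(\<Sum>j<N. z j * (\<Sum>i<n. \<psi> i j * f i)) = (\<Sum>i<n. (\<Sum>k<N. \<psi> i k * z k) * f i)"
proof -
  have "(\<Sum>j<N. z j * (\<Sum>i<n. \<psi> i j * f i)) = (\<Sum>i<n. \<Sum>j<N. z j * \<psi> i j * f i)"
    by (subst sum.swap) (simp add: sum_distrib_left mult.assoc)
  also have "\<dots> = (\<Sum>i<n. (\<Sum>k<N. \<psi> i k * z k) * f i)"
    by (simp add: sum_distrib_left sum_distrib_right mult_ac)
  finally show ?thesis .
qed

lemma regularized_normal_equation_bound: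
  fixes \<psi> :: "nat \<Rightarrow> nat \<Rightarrow> real"
  assumes normal_eq: "\<And>j. j < N \<Longrightarrow>
    z j + (\<Sum>i<n. \<psi> i j * (\<Sum>k<N. \<psi> i k * z k)) = - t j + (\<Sum>i<n. \<psi> i j * r i)"
  shows "(\<Sum>j<N. (z j)\<^sup>2) + (\<Sum>i<n. (\<Sum>k<N. \<psi> i k * z k)\<^sup>2) \<le> (\<Sum>j<N. (t j)\<^sup>2) + (\<Sum>i<n. (r i)\<^sup>2)"
proof -
  define p where "p = (\<lambda>i. \<Sum>k<N. \<psi> i k * z k)"
  have "(\<Sum>j<N. (z j)\<^sup>2) + (\<Sum>i<n. (p i)\<^sup>2) = (\<Sum>j<N. z j * (z j + (\<Sum>i<n. \<psi> i j * p i)))"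
    using sum_mult_transpose[where z=z and f=p]
    by (simp add: distrib_left sum.distrib power2_eq_square p_def)
  also have "\<dots> = (\<Sum>j<N. z j * (- t j + (\<Sum>i<n. \<psi> i j * r i)))"
    using normal_eq unfolding p_def by (intro sum.cong refl) simp
  also have "\<dots> = (\<Sum>j<N. (- z j) * t j) + (\<Sum>i<n. p i * r i)"
    using sum_mult_transpose[where z=z and f=r]
    by (simp add: right_diff_distrib sum_subtractf sum_negf p_def)
  finally have "(\<Sum>j<N. (z j)\<^sup>2) + (\<Sum>i<n. (p i)\<^sup>2) = (\<Sum>j<N. (- z j) * t j) + (\<Sum>i<n. p i * r i)" .
  then show ?thesis
    using two_sum_mult_le_sum_squares[of "\<lambda>j. - z j" t "{..<N}"]
      two_sum_mult_le_sum_squares[of p r "{..<n}"]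
    unfolding p_def by simp
qed

lemma gram_row_sum:
  fixes \<psi> :: "nat \<Rightarrow> nat \<Rightarrow> real"
  assumes "j < N"
  shows "(\<Sum>k<N. ((if j = k then 1 else 0) + (\<Sum>i<n. \<psi> i j * \<psi> i k)) * x k) =
    x j + (\<Sum>i<n. \<psi> i j * (\<Sum>k<N. \<psi> i k * x k))"
proof -
  have "(\<Sum>k<N. (if j = k then 1 else 0) * x k) = x j"
    using assms by (simp add: if_distrib[of "\<lambda>c. c * _"] cong: if_cong)
  moreover have "(\<Sum>k<N. (\<Sum>i<n. \<psi> i j * \<psi> i k) * x k) = (\<Sum>i<n. \<psi> i j * (\<Sum>k<N. \<psi> i k * x k))"
    unfolding sum_distrib_right by (subst sum.swap) (simp add: sum_distrib_left mult.assoc)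
  ultimately show ?thesis
    by (simp add: distrib_right sum.distrib)
qed

lemma quad_form_gram:
  fixes \<psi> :: "nat \<Rightarrow> nat \<Rightarrow> real"
  shows "quad_form (\<lambda>j k. (if j = k then 1 else 0) + (\<Sum>i<n. \<psi> i j * \<psi> i k)) N x =
    (\<Sum>j<N. (x j)\<^sup>2) + (\<Sum>i<n. (\<Sum>k<N. \<psi> i k * x k)\<^sup>2)"
proof -
  have "quad_form (\<lambda>j k. (if j = k then 1 else 0) + (\<Sum>i<n. \<psi> i j * \<psi> i k)) N x =
      (\<Sum>j<N. x j * (x j + (\<Sum>i<n. \<psi> i j * (\<Sum>k<N. \<psi> i k * x k))))"
    unfolding quad_form_eq_sum_mult_row by (intro sum.cong refl) (simp add: gram_row_sum)
  also have "\<dots> = (\<Sum>j<N. (x j)\<^sup>2) + (\<Sum>i<n. (\<Sum>k<N. \<psi> i k * x k)\<^sup>2)"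
    using sum_mult_transpose[where z=x and f="\<lambda>i. \<Sum>k<N. \<psi> i k * x k"]
    by (simp add: distrib_left sum.distrib power2_eq_square)
  finally show ?thesis .
qed

lemma Pinv_carrier: "Pinv s u p q n \<in> carrier_mat (p + q) (p + q)"
  by (simp add: Pinv_def)

lemma Pinv_index:
  assumes "j < p + q" "k < p + q"
  shows "Pinv s u p q n $$ (j, k) =
    (if j = k then 1 else 0) + (\<Sum>i<n. psi s u p q i $ j * psi s u p q i $ k)"
  using assms by (simp add: Pinv_def)

lemma Pinv_mult_vec_index:
  assumes "v \<in> carrier_vec (p + q)" "j < p + q"
  shows "(Pinv s u p q n *\<^sub>v v) $ j =
    v $ j + (\<Sum>i<n. psi s u p q i $ j * (\<Sum>k<p+q. psi s u p q i $ k * v $ k))"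
proof -
  have "(Pinv s u p q n *\<^sub>v v) $ j = (\<Sum>k<p+q. Pinv s u p q n $$ (j, k) * v $ k)"
    using assms by (rule mult_mat_vec_index_sum[OF Pinv_carrier])
  also have "\<dots> = (\<Sum>k<p+q. ((if j = k then 1 else 0) +
      (\<Sum>i<n. psi s u p q i $ j * psi s u p q i $ k)) * v $ k)"
    using assms by (intro sum.cong refl) (simp add: Pinv_index)
  also have "\<dots> = v $ j + (\<Sum>i<n. psi s u p q i $ j * (\<Sum>k<p+q. psi s u p q i $ k * v $ k))"
    using assms(2) by (rule gram_row_sum)
  finally show ?thesis .
qed

lemma quad_form_Pinv:
  "quad_form (\<lambda>j k. Pinv s u p q n $$ (j, k)) (p + q) x =
    (\<Sum>j<p+q. (x j)\<^sup>2) + (\<Sum>i<n. (\<Sum>k<p+q. psi s u p q i $ k * x k)\<^sup>2)"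
  unfolding quad_form_gram[symmetric] quad_form_def by (intro sum.cong refl) (simp add: Pinv_index)

lemma Pmat_inverse:
  shows "Pmat s u p q n \<in> carrier_mat (p + q) (p + q)"
    and "Pinv s u p q n * Pmat s u p q n = 1\<^sub>m (p + q)"
proof -
  let ?A = "Pinv s u p q n"
  have "v = 0\<^sub>v (p + q)" if v: "v \<in> carrier_vec (p + q)" "?A *\<^sub>v v = 0\<^sub>v (p + q)" for v
  proof -
    have "(\<Sum>k<p+q. ?A $$ (j, k) * v $ k) = 0" if "j < p + q" for j
      using v that by (simp add: mult_mat_vec_index_sum[OF Pinv_carrier, symmetric])
    then have "quad_form (\<lambda>j k. ?A $$ (j, k)) (p + q) (\<lambda>k. v $ k) = 0"
      unfolding quad_form_eq_sum_mult_row by simp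
    then have "(\<Sum>j<p+q. (v $ j)\<^sup>2) = 0"
      unfolding quad_form_Pinv by (simp add: add_nonneg_eq_0_iff sum_nonneg)
    then show ?thesis
      using v by (intro eq_vecI) (auto simp: sum_nonneg_eq_0_iff)
  qed
  then have "det ?A \<noteq> 0"
    using det_0_iff_vec_prod_zero[OF Pinv_carrier] by blast
  then obtain B where B: "mat_inverse ?A = Some B"
    using mat_inverse(1)[OF Pinv_carrier] det_non_zero_imp_unit[OF Pinv_carrier]
    by (metis not_None_eq)
  then show "Pmat s u p q n \<in> carrier_mat (p + q) (p + q)" "?A * Pmat s u p q n = 1\<^sub>m (p + q)"
    using mat_inverse(2)[OF Pinv_carrier B] by (auto simp: Pmat_def)
qed

lemma theta_carrier: "theta s u p q n \<in> carrier_vec (p + q)"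
  unfolding theta_def by (rule mult_mat_vec_carrier[OF Pmat_inverse(1)]) simp

lemma Pinv_mult_theta:
  "Pinv s u p q n *\<^sub>v theta s u p q n = vec (p + q) (\<lambda>j. \<Sum>i<n. psi s u p q i $ j * s (i + 1))"
  unfolding theta_def
  by (simp add: assoc_mult_mat_vec[symmetric, OF Pinv_carrier Pmat_inverse(1)] Pmat_inverse(2))

(* lam_min s u p q n is the smallest eigenvalue of P_(n+1)^-1, the matrix of theta (Suc n). *)
lemma ls_error_bound:
  fixes s u :: "nat \<Rightarrow> real" and \<theta> :: "real vec"
  assumes "p + q > 0" "dim_vec \<theta> = p + q"
  shows "lam_min s u p q n * (\<Sum>k<p+q. (theta s u p q (Suc n) $ k - \<theta> $ k)\<^sup>2) \<le>
    (\<Sum>k<p+q. (\<theta> $ k)\<^sup>2) + (\<Sum>i<Suc n. (s (i + 1) - (\<Sum>k<p+q. psi s u p q i $ k * \<theta> $ k))\<^sup>2)"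
proof -
  let ?\<psi> = "\<lambda>i k. psi s u p q i $ k" and ?\<theta>n = "theta s u p q (Suc n)"
  define z where "z = (\<lambda>k. ?\<theta>n $ k - \<theta> $ k)"
  define r where "r = (\<lambda>i. s (i + 1) - (\<Sum>k<p+q. ?\<psi> i k * \<theta> $ k))"
  have "z j + (\<Sum>i<Suc n. ?\<psi> i j * (\<Sum>k<p+q. ?\<psi> i k * z k)) = - \<theta> $ j + (\<Sum>i<Suc n. ?\<psi> i j * r i)"
    if "j < p + q" for j
  proof -
    have "(Pinv s u p q (Suc n) *\<^sub>v ?\<theta>n) $ j = (\<Sum>i<Suc n. ?\<psi> i j * s (i + 1))"
      unfolding Pinv_mult_theta using that by simp
    then have "?\<theta>n $ j + (\<Sum>i<Suc n. ?\<psi> i j * (\<Sum>k<p+q. ?\<psi> i k * ?\<theta>n $ k)) =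
        (\<Sum>i<Suc n. ?\<psi> i j * s (i + 1))"
      unfolding Pinv_mult_vec_index[OF theta_carrier that] .
    moreover have "(\<Sum>k<p+q. ?\<psi> i k * z k) =
        (\<Sum>k<p+q. ?\<psi> i k * ?\<theta>n $ k) - (\<Sum>k<p+q. ?\<psi> i k * \<theta> $ k)" for i
      by (simp only: z_def right_diff_distrib sum_subtractf)
    ultimately show ?thesis
      by (simp only: z_def r_def right_diff_distrib sum_subtractf)
  qed
  then have "(\<Sum>j<p+q. (z j)\<^sup>2) + (\<Sum>i<Suc n. (\<Sum>k<p+q. ?\<psi> i k * z k)\<^sup>2) \<le>
      (\<Sum>j<p+q. (\<theta> $ j)\<^sup>2) + (\<Sum>i<Suc n. (r i)\<^sup>2)"
    by (rule regularized_normal_equation_bound)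
  moreover have "lam_min s u p q n * (\<Sum>j<p+q. (z j)\<^sup>2) \<le>
      quad_form (\<lambda>j k. Pinv s u p q (Suc n) $$ (j, k)) (p + q) z"
    unfolding lam_min_def Suc_eq_plus1
    by (rule min_eigenvalue_mult_sum_squares_le_quad_form[OF Pinv_carrier \<open>p + q > 0\<close>])
      (simp add: Pinv_index mult.commute)
  ultimately show ?thesis
    unfolding quad_form_Pinv z_def r_def by linarith
qed

section \<open>The residual and the estimation error\<close>

lemma abs_quant_sub_le:
  assumes "\<epsilon> > 0"
  shows "\<bar>quant \<epsilon> x - x\<bar> \<le> \<epsilon> / 2"
proof -
  define F where "F = (of_int \<lfloor>x / \<epsilon> + 1/2\<rfloor> :: real)"
  have "F \<le> x / \<epsilon> + 1/2" "x / \<epsilon> + 1/2 < F + 1"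
    unfolding F_def by linarith+
  then have "\<epsilon> * F \<le> x + \<epsilon> / 2" "x + \<epsilon> / 2 < \<epsilon> * F + \<epsilon>"
    using assms by (simp_all add: field_simps)
  then show ?thesis
    unfolding quant_def F_def[symmetric] by linarith
qed

lemma abs_sum_mult_le:
  fixes f g :: "nat \<Rightarrow> real"
  assumes "\<And>k. k < n \<Longrightarrow> \<bar>f k\<bar> \<le> A" "\<And>k. k < n \<Longrightarrow> \<bar>g k\<bar> \<le> B"
  shows "\<bar>\<Sum>k<n. f k * g k\<bar> \<le> real n * (A * B)"
proof -
  have "\<bar>\<Sum>k<n. f k * g k\<bar> \<le> (\<Sum>k<n. \<bar>f k\<bar> * \<bar>g k\<bar>)"
    by (simp add: sum_abs[THEN order_trans] abs_mult)
  also have "\<dots> \<le> (\<Sum>k<n. A * B)"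
    using assms by (intro sum_mono mult_mono') auto
  finally show ?thesis
    by simp
qed

lemma sum_lessThan_add:
  fixes f :: "nat \<Rightarrow> 'a::comm_monoid_add"
  shows "(\<Sum>k<m+n. f k) = (\<Sum>k<m. f k) + (\<Sum>k<n. f (m + k))"
  by (induct n) (simp_all add: add.assoc)

lemma zneg_diff: "k \<le> i \<Longrightarrow> zneg f (int i - int k) = f (i - k)"
  unfolding zneg_def by (simp add: nat_diff_distrib)

lemma zle_diff: "k < i \<Longrightarrow> zle f (int i - int k) = f (i - k)"
  unfolding zle_def by (simp add: nat_diff_distrib)

lemma sum_shifted_lag_reindex:
  "(\<Sum>j = 1..m. c j * zneg f (int i - int j + 1)) = (\<Sum>k<m. c (k + 1) * zneg f (int i - int k))"
  by (simp add: sum.atLeast1_atMost_eq)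

lemma psi_dot_theta_bar:
  assumes "p0 \<le> p" "q \<le> q0" "p0 \<le> i"
  shows "(\<Sum>k<p+q. psi s u p q i $ k * theta_bar a b p0 q0 p q $ k) =
    (\<Sum>k<q. b (k + 1) * zle u (int i - int k)) - (\<Sum>k<p0. a (k + 1) * s (i - k))"
proof -
  let ?f = "\<lambda>k. psi s u p q i $ k * theta_bar a b p0 q0 p q $ k"
  have "(\<Sum>k<p. ?f k) = (\<Sum>k<p. if k < p0 then - (a (k + 1) * s (i - k)) else 0)"
    using assms by (intro sum.cong refl) (simp add: psi_def theta_bar_def zle_diff)
  also have "\<dots> = (\<Sum>k\<in>{..<p} \<inter> {k. k < p0}. - (a (k + 1) * s (i - k)))"
    by (simp add: sum.If_cases)
  also have "{..<p} \<inter> {k. k < p0} = {..<p0}"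
    using assms by auto
  finally have "(\<Sum>k<p. ?f k) = - (\<Sum>k<p0. a (k + 1) * s (i - k))"
    by (simp add: sum_negf)
  moreover have "?f (p + k) = b (k + 1) * zle u (int i - int k)" if "k < q" for k
    using that assms by (simp add: psi_def theta_bar_def)
  ultimately show ?thesis
    by (simp add: sum_lessThan_add)
qed

lemma residual_noise_gap_le:
  fixes a b y u w :: "nat \<Rightarrow> real" and \<epsilon> \<delta> c :: real
  defines "s \<equiv> \<lambda>k. quant \<epsilon> (y k)"
  assumes sys: "y (Suc i) =
        - (\<Sum>j = 1..p0. a j * zneg y (int i - int j + 1))
        + (\<Sum>j = 1..q0. b j * zneg u (int i - int j + 1)) + w (Suc i)"
    and u: "\<And>k. \<bar>u k\<bar> \<le> \<delta>"
    and a: "\<And>j. j \<in> {1..p0} \<Longrightarrow> \<bar>a j\<bar> \<le> c"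
    and b: "\<And>j. j \<in> {1..q0} \<Longrightarrow> \<bar>b j\<bar> \<le> c"
    and "\<epsilon> > 0" "0 \<le> c" "q \<le> q0" "p0 \<le> p" "p0 \<le> i"
  shows "\<bar>s (i + 1) - (\<Sum>k<p+q. psi s u p q i $ k * theta_bar a b p0 q0 p q $ k) - w (i + 1)\<bar>
     \<le> \<epsilon> / 2 * (1 + real p0 * c) + 2 * real q0 * c * \<delta>"
proof -
  define e0 where "e0 = s (i + 1) - y (i + 1)"
  define e where "e = (\<Sum>k<p0. a (k + 1) * (s (i - k) - y (i - k)))"
  \<comment> \<open>The regressor drops u_0 (zle) while the system uses it (zneg), and a model with q < q0
     omits inputs, so the input terms are bounded separately rather than cancelled.\<close>
  define Ua where "Ua = (\<Sum>k<q0. b (k + 1) * zneg u (int i - int k))"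
  define Ub where "Ub = (\<Sum>k<q. b (k + 1) * zle u (int i - int k))"
  have "(\<Sum>k<p0. a (k + 1) * zneg y (int i - int k)) = (\<Sum>k<p0. a (k + 1) * y (i - k))"
    using \<open>p0 \<le> i\<close> by (intro sum.cong refl) (simp add: zneg_diff)
  then have "y (i + 1) = - (\<Sum>k<p0. a (k + 1) * y (i - k)) + Ua + w (i + 1)"
    using sys unfolding sum_shifted_lag_reindex Ua_def by simp
  then have "s (i + 1) - (\<Sum>k<p+q. psi s u p q i $ k * theta_bar a b p0 q0 p q $ k) - w (i + 1) =
      e0 + e + Ua - Ub"
    using assms by (simp add: psi_dot_theta_bar e0_def e_def Ub_def right_diff_distrib sum_subtractf)
  moreover have "\<bar>e0\<bar> \<le> \<epsilon> / 2"
    unfolding e0_def s_def using \<open>\<epsilon> > 0\<close> by (rule abs_quant_sub_le)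
  moreover have "\<bar>e\<bar> \<le> real p0 * (c * (\<epsilon> / 2))"
    unfolding e_def using a abs_quant_sub_le[OF \<open>\<epsilon> > 0\<close>]
    by (intro abs_sum_mult_le) (auto simp: s_def)
  moreover have "\<bar>zneg u t\<bar> \<le> \<delta>" "\<bar>zle u t\<bar> \<le> \<delta>" for t
    using u[of "nat t"] u[of 0] by (auto simp: zneg_def zle_def)
  then have "\<bar>Ua\<bar> \<le> real q0 * (c * \<delta>)" "\<bar>Ub\<bar> \<le> real q * (c * \<delta>)"
    unfolding Ua_def Ub_def using b \<open>q \<le> q0\<close> by (auto intro!: abs_sum_mult_le)
  moreover have "real q * (c * \<delta>) \<le> real q0 * (c * \<delta>)"
    using \<open>q \<le> q0\<close> \<open>0 \<le> c\<close> u[of 0] by (intro mult_right_mono) auto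
  moreover have "\<epsilon> / 2 * (1 + real p0 * c) + 2 * real q0 * c * \<delta> =
      \<epsilon> / 2 + real p0 * (c * (\<epsilon> / 2)) + real q0 * (c * \<delta>) + real q0 * (c * \<delta>)"
    by (simp add: algebra_simps)
  ultimately show ?thesis
    by (simp only: abs_le_iff) linarith
qed

lemma sum_squares_le_of_abs_diff_le:
  fixes r w :: "nat \<Rightarrow> real"
  assumes "\<And>i. p0 \<le> i \<Longrightarrow> \<bar>r i - w i\<bar> \<le> G"
  shows "(\<Sum>i<n. (r i)\<^sup>2) \<le> (\<Sum>i<p0. (r i)\<^sup>2) + 2 * G\<^sup>2 * real n + 2 * (\<Sum>i<n. (w i)\<^sup>2)"
proof -
  have pointwise: "(r i)\<^sup>2 \<le> (if i < p0 then (r i)\<^sup>2 else 0) + (2 * G\<^sup>2 + 2 * (w i)\<^sup>2)" for i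
  proof (cases "i < p0")
    case False
    then have "(r i - w i)\<^sup>2 \<le> G\<^sup>2"
      using assms[of i] by (simp add: abs_le_square_iff[symmetric] order_trans[OF _ abs_ge_self])
    moreover have "(r i)\<^sup>2 \<le> 2 * (r i - w i)\<^sup>2 + 2 * (w i)\<^sup>2"
      using two_mult_le_sum_squares[of "r i - w i" "w i"] by (simp add: power2_eq_square algebra_simps)
    ultimately show ?thesis
      using False by simp
  qed simp
  have "(\<Sum>i<n. (r i)\<^sup>2) \<le> (\<Sum>i<n. (if i < p0 then (r i)\<^sup>2 else 0) + (2 * G\<^sup>2 + 2 * (w i)\<^sup>2))"
    by (intro sum_mono pointwise)
  also have "\<dots> = (\<Sum>i<n. if i < p0 then (r i)\<^sup>2 else 0) + 2 * G\<^sup>2 * real n + 2 * (\<Sum>i<n. (w i)\<^sup>2)"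
    by (simp add: sum.distrib sum_distrib_left)
  finally have "(\<Sum>i<n. (r i)\<^sup>2) \<le> \<dots>" .
  moreover have "(\<Sum>i<n. if i < p0 then (r i)\<^sup>2 else 0) \<le> (\<Sum>i<p0. (r i)\<^sup>2)"
  proof -
    have "(\<Sum>i<n. if i < p0 then (r i)\<^sup>2 else 0) = (\<Sum>i\<in>{..<n} \<inter> {..<p0}. (r i)\<^sup>2)"
      by (simp add: sum.inter_restrict lessThan_def)
    also have "\<dots> \<le> (\<Sum>i<p0. (r i)\<^sup>2)"
      by (intro sum_mono2) auto
    finally show ?thesis .
  qed
  ultimately show ?thesis
    by linarith
qed

lemma ls_error_eventually_bounded:
  fixes s u w :: "nat \<Rightarrow> real" and \<theta> :: "real vec"
  assumes "p + q > 0" "dim_vec \<theta> = p + q" "c2 > 0"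
    and gap: "\<And>i. p0 \<le> i \<Longrightarrow> \<bar>s (i + 1) - (\<Sum>k<p+q. psi s u p q i $ k * \<theta> $ k) - w (i + 1)\<bar> \<le> G"
    and lam: "\<forall>\<^sub>F n in sequentially. c2 * (real n + 1) \<le> lam_min s u p q n"
    and noise: "\<forall>\<^sub>F n in sequentially. (\<Sum>i<n. (w (Suc i))\<^sup>2) \<le> 4 * real n"
  shows "\<forall>\<^sub>F n in sequentially. (\<Sum>k<p+q. (theta s u p q n $ k - \<theta> $ k)\<^sup>2) \<le> (2 * G\<^sup>2 + 9) / c2"
proof -
  define r where "r = (\<lambda>i. s (i + 1) - (\<Sum>k<p+q. psi s u p q i $ k * \<theta> $ k))"
  define C where "C = (\<Sum>k<p+q. (\<theta> $ k)\<^sup>2) + (\<Sum>i<p0. (r i)\<^sup>2)"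
  define Z where "Z = (\<lambda>n. \<Sum>k<p+q. (theta s u p q n $ k - \<theta> $ k)\<^sup>2)"
  have bound: "Z (Suc m) \<le> (2 * G\<^sup>2 + 9) / c2"
    if lam_m: "c2 * (real m + 1) \<le> lam_min s u p q m"
      and noise_m: "(\<Sum>i<Suc m. (w (Suc i))\<^sup>2) \<le> 4 * real (Suc m)"
      and "C \<le> real (Suc m)" for m
  proof -
    have "Z (Suc m) \<ge> 0"
      by (simp add: Z_def sum_nonneg)
    with lam_m have "c2 * (real m + 1) * Z (Suc m) \<le> lam_min s u p q m * Z (Suc m)"
      by (rule mult_right_mono)
    also have "\<dots> \<le> (\<Sum>k<p+q. (\<theta> $ k)\<^sup>2) + (\<Sum>i<Suc m. (r i)\<^sup>2)"
      unfolding Z_def r_def using assms(1,2) by (rule ls_error_bound)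
    also have "(\<Sum>i<Suc m. (r i)\<^sup>2) \<le>
        (\<Sum>i<p0. (r i)\<^sup>2) + 2 * G\<^sup>2 * real (Suc m) + 2 * (\<Sum>i<Suc m. (w (Suc i))\<^sup>2)"
      using gap unfolding r_def by (intro sum_squares_le_of_abs_diff_le) simp
    finally have "c2 * (real m + 1) * Z (Suc m) \<le>
        C + 2 * G\<^sup>2 * real (Suc m) + 2 * (\<Sum>i<Suc m. (w (Suc i))\<^sup>2)"
      unfolding C_def by simp
    also have "\<dots> \<le> (2 * G\<^sup>2 + 9) * (real m + 1)"
      using noise_m \<open>C \<le> real (Suc m)\<close> by (simp add: algebra_simps)
    finally show ?thesis
      using \<open>c2 > 0\<close> by (simp add: pos_le_divide_eq mult.commute)
  qed
  have "\<forall>\<^sub>F m in sequentially. (\<Sum>i<Suc m. (w (Suc i))\<^sup>2) \<le> 4 * real (Suc m)"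
    using noise by (rule eventually_sequentially_Suc[THEN iffD2])
  moreover have "\<forall>\<^sub>F m in sequentially. C \<le> real (Suc m)"
    using eventually_ge_at_top[of "nat \<lceil>C\<rceil>"] by eventually_elim linarith
  ultimately have "\<forall>\<^sub>F m in sequentially. Z (Suc m) \<le> (2 * G\<^sup>2 + 9) / c2"
    using lam by eventually_elim (rule bound)
  then show ?thesis
    unfolding Z_def by (rule eventually_sequentially_Suc[THEN iffD1])
qed

lemma vnorm_theta_bar_sub_theta_hat_le:
  assumes "q \<le> q0"
    and "(\<Sum>k<p+q. (theta s u p q n $ k - theta_bar a b p0 q0 p q $ k)\<^sup>2) \<le> B"
  shows "vnorm (theta_bar a b p0 q0 p q0 - theta_hat s u p q0 q n) \<le>
    sqrt (B + (\<Sum>k<p+q0. (theta_bar a b p0 q0 p q0 $ k)\<^sup>2))"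
proof -
  let ?v = "theta_bar a b p0 q0 p q0 - theta_hat s u p q0 q n"
  let ?z = "\<lambda>k. theta s u p q n $ k - theta_bar a b p0 q0 p q $ k"
  have "?v $ k = (if k < p + q then - ?z k else theta_bar a b p0 q0 p q0 $ k)" if "k < p + q0" for k
    using that \<open>q \<le> q0\<close> by (auto simp: theta_bar_def theta_hat_def)
  then have "(?v $ k)\<^sup>2 \<le> (if k < p + q then (?z k)\<^sup>2 else 0) + (theta_bar a b p0 q0 p q0 $ k)\<^sup>2"
    if "k < p + q0" for k
    using that by (simp add: power2_commute)
  then have "(\<Sum>k<p+q0. (?v $ k)\<^sup>2) \<le>
      (\<Sum>k<p+q0. if k < p + q then (?z k)\<^sup>2 else 0) + (\<Sum>k<p+q0. (theta_bar a b p0 q0 p q0 $ k)\<^sup>2)"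
    unfolding sum.distrib[symmetric] by (intro sum_mono) simp
  also have "(\<Sum>k<p+q0. if k < p + q then (?z k)\<^sup>2 else 0) = (\<Sum>k<p+q. (?z k)\<^sup>2)"
  proof -
    have "{..<p+q0} \<inter> {k. k < p + q} = {..<p+q}"
      using \<open>q \<le> q0\<close> by auto
    then show ?thesis
      by (simp add: sum.If_cases)
  qed
  finally have "(\<Sum>k<p+q0. (?v $ k)\<^sup>2) \<le> B + (\<Sum>k<p+q0. (theta_bar a b p0 q0 p q0 $ k)\<^sup>2)"
    using assms(2) by linarith
  then show ?thesis
    unfolding vnorm_def by (simp add: theta_hat_def)
qed

section \<open>Noise and input bounds\<close>

lemma std_normal_moments:
  assumes "distributed M lborel W (\<lambda>x. ennreal (std_normal_density x))"
  shows "integrable M (\<lambda>\<omega>. (W \<omega>) ^ k)"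
    and "(\<integral>\<omega>. (W \<omega>)\<^sup>2 \<partial>M) = 1"
    and "(\<integral>\<omega>. (W \<omega>) ^ 4 \<partial>M) = 3"
proof -
  have nonneg: "\<And>x. 0 \<le> std_normal_density x"
    by (simp add: normal_density_nonneg)
  show "integrable M (\<lambda>\<omega>. (W \<omega>) ^ k)"
    using distributed_integrable[OF assms, of "\<lambda>x. x ^ k"] integrable_std_normal_moment[of k] nonneg
    by simp
  have "(\<integral>\<omega>. (W \<omega>) ^ (2 * m) \<partial>M) = fact (2 * m) / (2 ^ m * fact m)" for m
    using distributed_integral[OF assms, of "\<lambda>x. x ^ (2 * m)"] nonneg
    by (simp add: integral_std_normal_moment_even)
  from this[of 1] this[of 2] show "(\<integral>\<omega>. (W \<omega>)\<^sup>2 \<partial>M) = 1" "(\<integral>\<omega>. (W \<omega>) ^ 4 \<partial>M) = 3"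
    by (simp_all add: fact_numeral)
qed

lemma (in prob_space) indep_std_normal_squares_covariance:
  assumes indep: "indep_vars (\<lambda>_. borel) w UNIV"
    and distr: "\<And>i. distributed M lborel (w i) (\<lambda>x. ennreal (std_normal_density x))"
  shows "integrable M (\<lambda>\<omega>. ((w i \<omega>)\<^sup>2 - 1) * ((w j \<omega>)\<^sup>2 - 1))"
    and "(\<integral>\<omega>. ((w i \<omega>)\<^sup>2 - 1) * ((w j \<omega>)\<^sup>2 - 1) \<partial>M) = (if i = j then 2 else 0)"
proof -
  define V where "V = (\<lambda>i \<omega>. (w i \<omega>)\<^sup>2 - 1)"
  have int_pow: "integrable M (\<lambda>\<omega>. (w i \<omega>) ^ k)" for i k
    using std_normal_moments(1)[OF distr] .
  have int_V: "integrable M (V i)" for i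
    unfolding V_def using int_pow by auto
  have "(\<integral>\<omega>. V i \<omega> * V j \<omega> \<partial>M) = (if i = j then 2 else 0) \<and> integrable M (\<lambda>\<omega>. V i \<omega> * V j \<omega>)"
  proof (cases "i = j")
    case True
    have "(\<lambda>\<omega>. V i \<omega> * V i \<omega>) = (\<lambda>\<omega>. (w i \<omega>) ^ 4 - 2 * (w i \<omega>)\<^sup>2 + 1)"
      by (auto simp: V_def algebra_simps power2_eq_square eval_nat_numeral)
    moreover have "(\<integral>\<omega>. (w i \<omega>) ^ 4 - 2 * (w i \<omega>)\<^sup>2 + 1 \<partial>M) = 3 - 2 * 1 + 1"
      using int_pow std_normal_moments(2,3)[OF distr, of i] by (simp add: prob_space)
    ultimately show ?thesis
      using True int_pow by simp
  next
    case False
    have "indep_vars (\<lambda>_. borel) (\<lambda>i \<omega>. (\<lambda>x. x\<^sup>2 - 1) (w i \<omega>)) UNIV"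
      by (rule indep_vars_compose2[OF indep]) auto
    then have indep_V: "indep_vars (\<lambda>_. borel) V {i, j}"
      unfolding V_def by (rule indep_vars_subset) auto
    have mean_V: "(\<integral>\<omega>. V k \<omega> \<partial>M) = 0" for k
      unfolding V_def using int_pow std_normal_moments(2)[OF distr, of k] by (simp add: prob_space)
    have "integrable M (\<lambda>\<omega>. \<Prod>k\<in>{i, j}. V k \<omega>)"
      using indep_V int_V by (intro indep_vars_integrable) auto
    moreover have "(\<integral>\<omega>. (\<Prod>k\<in>{i, j}. V k \<omega>) \<partial>M) = (\<Prod>k\<in>{i, j}. \<integral>\<omega>. V k \<omega> \<partial>M)"
      using indep_V int_V by (intro indep_vars_lebesgue_integral) auto
    ultimately show ?thesis
      using False mean_V by simp
  qed
  then show "integrable M (\<lambda>\<omega>. ((w i \<omega>)\<^sup>2 - 1) * ((w j \<omega>)\<^sup>2 - 1))"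
    and "(\<integral>\<omega>. ((w i \<omega>)\<^sup>2 - 1) * ((w j \<omega>)\<^sup>2 - 1) \<partial>M) = (if i = j then 2 else 0)"
    unfolding V_def by auto
qed

lemma partial_sums_le_of_dyadic:
  fixes x :: "nat \<Rightarrow> real"
  assumes nonneg: "\<And>i. 0 \<le> x i"
    and dyadic: "\<forall>\<^sub>F m in sequentially. (\<Sum>i<2 ^ m. x i) \<le> 2 * 2 ^ m"
  shows "\<forall>\<^sub>F n in sequentially. (\<Sum>i<n. x i) \<le> 4 * real n"
proof -
  obtain m0 where m0: "\<And>m. m \<ge> m0 \<Longrightarrow> (\<Sum>i<2 ^ m. x i) \<le> 2 * 2 ^ m"
    using dyadic unfolding eventually_sequentially by blast
  have "(\<Sum>i<n. x i) \<le> 4 * real n" if "2 ^ m0 \<le> n" for n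
  proof -
    have "n \<ge> 1"
      using that by (metis le_trans one_le_numeral one_le_power)
    then obtain k where k: "2 ^ k \<le> n" "n < 2 ^ (k + 1)"
      using ex_power_ivl1[of 2 n] by auto
    have "m0 \<le> k + 1"
    proof (rule ccontr)
      assume "\<not> m0 \<le> k + 1"
      then have "2 ^ (k + 1) \<le> (2::nat) ^ m0"
        by (intro power_increasing) auto
      then show False
        using that k by simp
    qed
    have "(\<Sum>i<n. x i) \<le> (\<Sum>i<2 ^ (k + 1). x i)"
      using k nonneg by (intro sum_mono2) auto
    also have "\<dots> \<le> 2 * 2 ^ (k + 1)"
      using m0 \<open>m0 \<le> k + 1\<close> by blast
    also have "\<dots> \<le> 4 * real n"
      using k of_nat_le_iff[of "2 ^ k" n, symmetric] by simp
    finally show ?thesis .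
  qed
  then show ?thesis
    unfolding eventually_sequentially by blast
qed

lemma (in prob_space) std_normal_sum_squares_eventually_le:
  assumes indep: "indep_vars (\<lambda>_. borel) w UNIV"
    and distr: "\<And>i. distributed M lborel (w i) (\<lambda>x. ennreal (std_normal_density x))"
  shows "AE \<omega> in M. \<forall>\<^sub>F n in sequentially. (\<Sum>i<n. (w (Suc i) \<omega>)\<^sup>2) \<le> 4 * real n"
proof -
  have [measurable]: "w i \<in> borel_measurable M" for i
    using distributed_measurable[OF distr[of i]] by simp
  define T where "T = (\<lambda>m \<omega>. \<Sum>i<(2::nat) ^ m. (w (Suc i) \<omega>)\<^sup>2 - 1)"
  have [measurable]: "T m \<in> borel_measurable M" for m
    unfolding T_def by (intro borel_measurable_sum borel_measurable_diff borel_measurable_power) auto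
  have T_square: "integrable M (\<lambda>\<omega>. (T m \<omega>)\<^sup>2)" "(\<integral>\<omega>. (T m \<omega>)\<^sup>2 \<partial>M) = 2 * 2 ^ m" for m
  proof -
    have square: "(\<lambda>\<omega>. (T m \<omega>)\<^sup>2) = (\<lambda>\<omega>. \<Sum>i<(2::nat) ^ m. \<Sum>j<(2::nat) ^ m.
        ((w (Suc i) \<omega>)\<^sup>2 - 1) * ((w (Suc j) \<omega>)\<^sup>2 - 1))"
      unfolding T_def by (simp add: power2_eq_square[of "sum _ _"] sum_product)
    show "integrable M (\<lambda>\<omega>. (T m \<omega>)\<^sup>2)"
      unfolding square using indep_std_normal_squares_covariance(1)[OF indep distr] by simp
    have "(\<integral>\<omega>. (T m \<omega>)\<^sup>2 \<partial>M) = (\<Sum>i<(2::nat) ^ m. \<Sum>j<(2::nat) ^ m. if i = j then 2 else 0)"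
      unfolding square using indep_std_normal_squares_covariance[OF indep distr]
      by (simp add: Bochner_Integration.integral_sum)
    then show "(\<integral>\<omega>. (T m \<omega>)\<^sup>2 \<partial>M) = 2 * 2 ^ m"
      by simp
  qed
  define A where "A = (\<lambda>m. {\<omega>\<in>space M. (4::real) ^ m \<le> (T m \<omega>)\<^sup>2})"
  have A_sets: "A m \<in> sets M" for m
    unfolding A_def by measurable
  have prob_A: "measure M (A m) \<le> 2 * (1 / 2) ^ m" for m
  proof -
    have "measure M (A m) \<le> (\<integral>\<omega>. (T m \<omega>)\<^sup>2 \<partial>M) / 4 ^ m"
      unfolding A_def using T_square
      by (intro integral_Markov_inequality_measure[where A="space M"]) auto
    also have "\<dots> = 2 * (1 / 2) ^ m"
    proof -
      have "(4::real) ^ m = 2 ^ m * 2 ^ m"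
        by (simp flip: power_mult_distrib)
      then show ?thesis
        using T_square(2) by (simp add: power_one_over field_simps)
    qed
    finally show ?thesis .
  qed
  have "summable (\<lambda>m. measure M (A m))"
    by (rule summable_comparison_test'[where g="\<lambda>m. 2 * (1 / 2) ^ m"]) (use prob_A in auto)
  then have "AE \<omega> in M. \<forall>\<^sub>F m in sequentially. \<omega> \<in> space M - A m"
    using A_sets by (intro borel_cantelli_AE1) (auto simp: emeasure_eq_measure)
  then show ?thesis
  proof (rule AE_mp, intro AE_I2 impI)
    fix \<omega> assume "\<omega> \<in> space M" and ev: "\<forall>\<^sub>F m in sequentially. \<omega> \<in> space M - A m"
    from ev have "\<forall>\<^sub>F m in sequentially. (\<Sum>i<(2::nat) ^ m. (w (Suc i) \<omega>)\<^sup>2) \<le> 2 * 2 ^ m"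
    proof eventually_elim
      case (elim m)
      then have "(T m \<omega>)\<^sup>2 < (2 ^ m)\<^sup>2"
        using \<open>\<omega> \<in> space M\<close> by (auto simp: A_def power2_eq_square simp flip: power_mult_distrib)
      then have "T m \<omega> < 2 ^ m"
        by (rule power2_less_imp_less) simp
      then show ?case
        by (simp add: T_def sum_subtractf)
    qed
    then show "\<forall>\<^sub>F n in sequentially. (\<Sum>i<n. (w (Suc i) \<omega>)\<^sup>2) \<le> 4 * real n"
      by (intro partial_sums_le_of_dyadic) auto
  qed
qed

lemma (in prob_space) AE_abs_le_of_uniform:
  fixes u :: "nat \<Rightarrow> 'a \<Rightarrow> real"
  assumes "\<And>i. distributed M lborel (u i) (\<lambda>x. ennreal (indicator {-\<delta>..\<delta>} x / (2 * \<delta>)))"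
  shows "AE \<omega> in M. \<forall>k. \<bar>u k \<omega>\<bar> \<le> \<delta>"
proof -
  have "AE \<omega> in M. \<bar>u k \<omega>\<bar> \<le> \<delta>" for k
  proof (rule AE_distrD[OF distributed_measurable[OF assms[of k]]])
    have "AE x in density lborel (\<lambda>x. ennreal (indicator {-\<delta>..\<delta>} x / (2 * \<delta>))). \<bar>x\<bar> \<le> \<delta>"
      by (subst AE_density) (auto simp: indicator_def split: if_splits)
    then show "AE x in distr M lborel (u k). \<bar>x\<bar> \<le> \<delta>"
      unfolding distributed_distr_eq_density[OF assms[of k]] .
  qed
  then show ?thesis
    by (simp add: AE_all_countable)
qed

theorem lemma6:
  fixes M :: "'w measure"
    and a b :: "nat \<Rightarrow> real"
    and p0 q0 pstar qstar q :: nat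
    and \<delta> \<epsilon> c c2 :: real
    and y u w :: "nat \<Rightarrow> 'w \<Rightarrow> real"
  assumes P: "prob_space M"
    \<comment> \<open>(A1) inputs i.i.d. uniform on [-delta, delta]\<close>
    and A1_pos: "\<delta> > 0"
    and A1_indep: "prob_space.indep_vars M (\<lambda>_. borel) u UNIV"
    and A1_distr: "\<And>i. distributed M lborel (u i)
                      (\<lambda>x. ennreal (indicator {-\<delta>..\<delta>} x / (2 * \<delta>)))"
    \<comment> \<open>noise i.i.d. N(0,1)\<close>
    and w_indep: "prob_space.indep_vars M (\<lambda>_. borel) w UNIV"
    and w_distr: "\<And>i. distributed M lborel (w i) (\<lambda>x. ennreal (std_normal_density x))"
    \<comment> \<open>system equation, n >= 0, with zero values at negative times\<close>
    and sys: "\<And>\<omega> n. y (Suc n) \<omega> =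
        - (\<Sum>i = 1..p0. a i * zneg (\<lambda>k. y k \<omega>) (int n - int i + 1))
        + (\<Sum>j = 1..q0. b j * zneg (\<lambda>k. u k \<omega>) (int n - int j + 1))
        + w (Suc n) \<omega>"
    and ap0: "p0 > 0 \<Longrightarrow> a p0 \<noteq> 0"
    and q0_pos: "q0 \<ge> 1"
    and bq0: "b q0 \<noteq> 0"
    \<comment> \<open>(A2) stability\<close>
    and A2: "\<And>z::complex. cmod z \<le> 1 \<Longrightarrow> 1 + (\<Sum>i = 1..p0. complex_of_real (a i) * z ^ i) \<noteq> 0"
    \<comment> \<open>(A3)\<close>
    and A3_c: "c > 0"
    and A3_a: "\<And>i. i \<in> {1..p0} \<Longrightarrow> \<bar>a i\<bar> \<le> c"
    and A3_b: "\<And>j. j \<in> {1..q0} \<Longrightarrow> \<bar>b j\<bar> \<le> c"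
    and A3_eps: "\<epsilon> > 0" "\<epsilon> < 1 / (2 * (1 + real p0 * c))"
    \<comment> \<open>(A4)\<close>
    and A4: "pstar > 0" "qstar > 0" "p0 \<le> pstar" "1 \<le> q0" "q0 \<le> qstar"
    \<comment> \<open>(A6)\<close>
    and A6_c2: "c2 > 0"
    and A6: "\<And>q'. q' \<le> qstar \<Longrightarrow> AE \<omega> in M. \<forall>\<^sub>F n in sequentially.
        lam_min (\<lambda>k. quant \<epsilon> (y k \<omega>)) (\<lambda>k. u k \<omega>) pstar q' n \<ge> c2 * (real n + 1)"
    and q: "q \<le> q0"
  shows "\<exists>\<gamma>'. AE \<omega> in M. \<forall>\<^sub>F n in sequentially.
      vnorm (theta_bar a b p0 q0 pstar q0
             - theta_hat (\<lambda>k. quant \<epsilon> (y k \<omega>)) (\<lambda>k. u k \<omega>) pstar q0 q n) \<le> \<gamma>'"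
proof -
  \<comment> \<open>Stability (A2), independence of the inputs, the nonzero leading coefficients and the upper
     bound on eps are not needed for boundedness.\<close>
  interpret prob_space M
    by (rule P)
  define G where "G = \<epsilon> / 2 * (1 + real p0 * c) + 2 * real q0 * c * \<delta>"
  define \<gamma> where "\<gamma> = sqrt ((2 * G\<^sup>2 + 9) / c2 + (\<Sum>k<pstar+q0. (theta_bar a b p0 q0 pstar q0 $ k)\<^sup>2))"
  have "AE \<omega> in M. \<forall>k. \<bar>u k \<omega>\<bar> \<le> \<delta>"
    using A1_distr by (rule AE_abs_le_of_uniform)
  moreover have "AE \<omega> in M. \<forall>\<^sub>F n in sequentially. (\<Sum>i<n. (w (Suc i) \<omega>)\<^sup>2) \<le> 4 * real n"
    using w_indep w_distr by (rule std_normal_sum_squares_eventually_le)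
  moreover have "AE \<omega> in M. \<forall>\<^sub>F n in sequentially.
      c2 * (real n + 1) \<le> lam_min (\<lambda>k. quant \<epsilon> (y k \<omega>)) (\<lambda>k. u k \<omega>) pstar q n"
    using A6 q A4(5) by simp
  ultimately have "AE \<omega> in M. \<forall>\<^sub>F n in sequentially.
      vnorm (theta_bar a b p0 q0 pstar q0
             - theta_hat (\<lambda>k. quant \<epsilon> (y k \<omega>)) (\<lambda>k. u k \<omega>) pstar q0 q n) \<le> \<gamma>"
  proof eventually_elim
    case (elim \<omega>)
    have "\<bar>quant \<epsilon> (y (i + 1) \<omega>)
        - (\<Sum>k<pstar+q. psi (\<lambda>k. quant \<epsilon> (y k \<omega>)) (\<lambda>k. u k \<omega>) pstar q i $ k
                         * theta_bar a b p0 q0 pstar q $ k)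
        - w (i + 1) \<omega>\<bar> \<le> G" if "p0 \<le> i" for i
      unfolding G_def using sys elim(1) A3_a A3_b A3_eps(1) A3_c q A4(3) that
      by (intro residual_noise_gap_le) auto
    then have "\<forall>\<^sub>F n in sequentially. (\<Sum>k<pstar+q. (theta (\<lambda>k. quant \<epsilon> (y k \<omega>)) (\<lambda>k. u k \<omega>) pstar q n $ k
        - theta_bar a b p0 q0 pstar q $ k)\<^sup>2) \<le> (2 * G\<^sup>2 + 9) / c2"
      using A4(1) A6_c2 elim(2,3) by (intro ls_error_eventually_bounded) (auto simp: theta_bar_def)
    then show ?case
      unfolding \<gamma>_def by eventually_elim (rule vnorm_theta_bar_sub_theta_hat_le[OF q])
  qed
  then show ?thesis
    by blast
qed

end
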